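(* Let $G=(U,V,E)$ be a bipartite graph with $|U|=|V|=N$ in which every vertex of $U$ has at least one neighbor, and run the matching algorithm on $G$. Let $i\ge0$ with $|M(i)|<N$, let $l$ be an integer, and let $u_0\in U$ be free with respect to $M(i)$ with $n_{u_0}\subseteq D_l(i)$. Let $u_1\in U$ be the endpoint of an alternating path $u_0,v,u_1$ of length $2$ with respect to $M(i)$, i.e. $v\in n_{u_0}$ and $(u_1,v)\in M(i)$. Then no $v'\in n_{u_1}$ lies in $D_{l-2}(i)\setminus D_{l-1}(i)$.
   Context: Matching algorithm. For $u\in U$ let $n_u=\{v\in V:(u,v)\in E\}$. The algorithm maintains a matching $M\subseteq E$ (initially empty) and an integer value $h_v$ for each $v\in V$ (initially $0$). A vertex is free if no edge of $M$ is incident to it. One iteration: choose any free $u\in U$ (arbitrary choice); choose $j\in\arg\min_{v\in n_u}h_v$ (ties broken arbitrarily); if some $u_{\rm old}\in U$ has $(u_{\rm old},j)\in M$, remove $(u_{\rm old},j)$ from $M$ (so $u_{\rm old}$ becomes free); add $(u,j)$ to $M$; increase $h_j$ by $1$. Iterations are repeated while $|M|<N$ and the algorithm terminates when $|M|=N$. $M(i)$ and $h_v(i)$ denote the matching and the values after the $i$-th iteration. For an integer $l$, $D_l(i)=\{v\in V: h_v(i)\ge l\}$. With respect to a matching $M$, an alternating path is a simple path in $G$ whose edges alternate between edges not in $M$ and edges in $M$; its length is its number of edges. *)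

theory Defs
  imports Main
begin

(* Bipartite graph G = (U, V, E): the two sides live in distinct types, E \<subseteq> U \<times> V. *)

definition nbrs :: "('u \<times> 'v) set \<Rightarrow> 'u \<Rightarrow> 'v set" where
  "nbrs E u = {v. (u, v) \<in> E}"

definition free_U :: "('u \<times> 'v) set \<Rightarrow> 'u \<Rightarrow> bool" where
  "free_U M u \<longleftrightarrow> (\<forall>v. (u, v) \<notin> M)"

definition D_set :: "'v set \<Rightarrow> ('v \<Rightarrow> int) \<Rightarrow> int \<Rightarrow> 'v set" where
  "D_set V h l = {v \<in> V. h v \<ge> l}"

definition alg_step ::
  "'u set \<Rightarrow> ('u \<times> 'v) set \<Rightarrow> nat \<Rightarrow> ('u \<times> 'v) set \<times> ('v \<Rightarrow> int)
     \<Rightarrow> ('u \<times> 'v) set \<times> ('v \<Rightarrow> int) \<Rightarrow> bool" where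
  "alg_step U E N s s' \<longleftrightarrow>
     (let M = fst s; h = snd s in
      card M < N \<and>
      (\<exists>u j. u \<in> U \<and> free_U M u \<and>
             j \<in> nbrs E u \<and> (\<forall>v \<in> nbrs E u. h j \<le> h v) \<and>
             s' = ((M - {(uo, j') | uo j'. j' = j}) \<union> {(u, j)}, h(j := h j + 1))))"

(* run s of the algorithm up to iteration i: s k = (M(k), h(k)) *)
definition alg_run ::
  "'u set \<Rightarrow> ('u \<times> 'v) set \<Rightarrow> nat \<Rightarrow> (nat \<Rightarrow> ('u \<times> 'v) set \<times> ('v \<Rightarrow> int)) \<Rightarrow> nat \<Rightarrow> bool" where
  "alg_run U E N s i \<longleftrightarrow>
     s 0 = ({}, (\<lambda>_. 0)) \<and> (\<forall>k < i. alg_step U E N (s k) (s (Suc k)))"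

end

theory Submission
  imports Defs
begin

text \<open>The algorithm maintains the invariant that a matched vertex \<open>j\<close> of \<open>u\<close> satisfies
  \<open>h\<^sub>j \<le> h\<^sub>w + 1\<close> for every neighbour \<open>w\<close> of \<open>u\<close>: when \<open>(u, j)\<close> enters the matching,
  \<open>h\<^sub>j\<close> is minimal on \<open>n\<^sub>u\<close> and is then raised by one, and afterwards values only grow
  except that \<open>h\<^sub>j\<close> itself is raised only when \<open>j\<close> is rematched. Applied to the matched
  edge \<open>(u\<^sub>1, v)\<close> with \<open>h\<^sub>v \<ge> l\<close>, it puts every neighbour of \<open>u\<^sub>1\<close> into \<open>D\<^bsub>l-1\<^esub>\<close>.\<close>

definition matched_bounded :: "('u \<times> 'v) set \<Rightarrow> ('u \<times> 'v) set \<Rightarrow> ('v \<Rightarrow> int) \<Rightarrow> bool" where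
  "matched_bounded E M h \<longleftrightarrow> (\<forall>(u, j) \<in> M. \<forall>w \<in> nbrs E u. h j \<le> h w + 1)"

lemma alg_step_preserves_matched_bounded:
  assumes step: "alg_step U E N (M, h) (M', h')"
    and bounded: "matched_bounded E M h"
  shows "matched_bounded E M' h'"
proof -
  from step obtain u j where j_min: "j \<in> nbrs E u" "\<forall>w \<in> nbrs E u. h j \<le> h w"
    and M': "M' = (M - {(uo, j') | uo j'. j' = j}) \<union> {(u, j)}"
    and h': "h' = h(j := h j + 1)"
    unfolding alg_step_def by auto
  show ?thesis
    unfolding matched_bounded_def
  proof (intro ballI, clarify)
    fix a b w
    assume ab: "(a, b) \<in> M'" and w: "w \<in> nbrs E a"
    show "h' b \<le> h' w + 1"
    proof (cases "(a, b) = (u, j)")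
      case True
      then show ?thesis using j_min w h' by auto
    next
      case False
      with ab M' have "(a, b) \<in> M" "b \<noteq> j" by auto
      with bounded w have "h b \<le> h w + 1" unfolding matched_bounded_def by auto
      with \<open>b \<noteq> j\<close> h' show ?thesis by auto
    qed
  qed
qed

lemma alg_run_matched_bounded:
  assumes run: "alg_run U E N s i" and "k \<le> i"
  shows "matched_bounded E (fst (s k)) (snd (s k))"
  using \<open>k \<le> i\<close>
proof (induction k)
  case 0
  then show ?case using run unfolding alg_run_def matched_bounded_def by auto
next
  case (Suc k)
  then have "alg_step U E N (fst (s k), snd (s k)) (fst (s (Suc k)), snd (s (Suc k)))"
    using run unfolding alg_run_def by simp
  with Suc show ?case using alg_step_preserves_matched_bounded by fastforce
qed

theorem mainTheorem6:
  fixes U :: "'u set" and V :: "'v set" and E :: "('u \<times> 'v) set"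
    and N :: nat and s :: "nat \<Rightarrow> ('u \<times> 'v) set \<times> ('v \<Rightarrow> int)"
    and i :: nat and l :: int and u0 u1 :: 'u and v :: 'v
  assumes "finite U" and "finite V" and "card U = N" and "card V = N"
    and "E \<subseteq> U \<times> V"
    and "\<forall>u \<in> U. nbrs E u \<noteq> {}"
    and "alg_run U E N s i"
    and "card (fst (s i)) < N"
    and "u0 \<in> U" and "free_U (fst (s i)) u0"
    and "nbrs E u0 \<subseteq> D_set V (snd (s i)) l"
    and "u1 \<in> U" and "v \<in> nbrs E u0" and "(u1, v) \<in> fst (s i)"
  shows "\<forall>v' \<in> nbrs E u1. v' \<notin> D_set V (snd (s i)) (l - 2) - D_set V (snd (s i)) (l - 1)"
proof
  fix v' assume v': "v' \<in> nbrs E u1"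
  have "matched_bounded E (fst (s i)) (snd (s i))"
    using alg_run_matched_bounded[OF \<open>alg_run U E N s i\<close>] by simp
  with v' \<open>(u1, v) \<in> fst (s i)\<close> have "snd (s i) v \<le> snd (s i) v' + 1"
    unfolding matched_bounded_def by blast
  moreover have "l \<le> snd (s i) v"
    using \<open>nbrs E u0 \<subseteq> D_set V (snd (s i)) l\<close> \<open>v \<in> nbrs E u0\<close> unfolding D_set_def by auto
  moreover have "v' \<in> V"
    using v' \<open>E \<subseteq> U \<times> V\<close> unfolding nbrs_def by auto
  ultimately have "v' \<in> D_set V (snd (s i)) (l - 1)"
    unfolding D_set_def by auto
  then show "v' \<notin> D_set V (snd (s i)) (l - 2) - D_set V (snd (s i)) (l - 1)" by blast
qed

end
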